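(* For all non-negative integers $n$ and $p$, $$\sum_{k=1}^n\binom{2k}{k}^{-1}\binom{2(k+p)}{k+p}\binom{k+p}{k}\left(O_{k+p}-O_k\right)=\frac14\binom{2n}{n}^{-1}\binom{2(n+p+1)}{n+p+1}\binom{n+p+1}{n}\left(O_{n+p+1}-O_n\right)-\frac14\binom{2(p+1)}{p+1}O_{p+1}.$$
   Context: The odd harmonic numbers are $O_n=\sum_{k=1}^n\frac{1}{2k-1}$, $O_0=0$. *)

theory Defs
  imports Complex_Main
begin

definition odd_harmonic :: "nat \<Rightarrow> real" where
  "odd_harmonic n = (\<Sum>k=1..n. 1 / (2 * real k - 1))"

end

theory Submission imports Defs begin

text \<open>
  The sum telescopes. With \<open>Q = n + p + 1\<close>, the right-hand side is \<open>T n - T 0\<close> for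
  \<open>T n = binom(2Q, Q) binom(Q, n) (O\<^sub>Q - O\<^sub>n) / (4 binom(2n, n))\<close>. Passing from \<open>n\<close> to
  \<open>n + 1\<close> changes every binomial coefficient by a rational factor, and \<open>O\<^sub>Q\<close>, \<open>O\<^sub>n\<close> by the
  reciprocals \<open>1/(2Q+1)\<close>, \<open>1/(2n+1)\<close>; after normalising both \<open>T (n+1)\<close> and \<open>T n\<close> to
  multiples of \<open>binom(2Q, Q) binom(Q, n+1) / binom(2n+2, n+1)\<close>, their difference is
  exactly the \<open>(n+1)\<close>-st summand.
\<close>

lemma odd_harmonic_Suc: "odd_harmonic (Suc k) = odd_harmonic k + 1 / (2 * real k + 1)"
  unfolding odd_harmonic_def by (simp add: algebra_simps)

lemma diff_times_binomial_eq_Suc_times: "(m - k) * (m choose k) = Suc k * (m choose Suc k)"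
  using binomial_absorb_comp[of m k] binomial_absorption[of k m] by simp

lemma Suc_times_central_binomial_Suc:
  "Suc q * (2 * Suc q choose Suc q) = 2 * (2 * q + 1) * (2 * q choose q)"
proof -
  have upper: "Suc q * (2 * Suc q choose Suc q) = 2 * Suc q * (Suc (2 * q) choose q)"
    using Suc_times_binomial[of q "Suc (2 * q)"] by (simp del: binomial_Suc_Suc)
  have lower: "Suc q * (Suc (2 * q) choose q) = Suc (2 * q) * (2 * q choose q)"
    using binomial_absorb_comp[of "Suc (2 * q)" q] by (simp add: Suc_diff_le del: binomial_Suc_Suc)
  have "Suc q * (Suc q * (2 * Suc q choose Suc q)) = 2 * Suc q * (Suc q * (Suc (2 * q) choose q))"
    unfolding upper by (simp only: ac_simps)
  also have "\<dots> = Suc q * (2 * (2 * q + 1) * (2 * q choose q))"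
    unfolding lower by (simp only: ac_simps) simp
  finally show ?thesis
    by (metis mult_left_cancel nat.distinct(1))
qed

definition odd_harmonic_antidiff :: "nat \<Rightarrow> nat \<Rightarrow> real" where
  "odd_harmonic_antidiff p n =
     real (2 * (n + p + 1) choose (n + p + 1)) * real ((n + p + 1) choose n)
       * (odd_harmonic (n + p + 1) - odd_harmonic n) / (4 * real (2 * n choose n))"

lemma odd_harmonic_antidiff_eq:
  fixes n p :: nat
  defines "Q \<equiv> n + p + 1"
  shows "odd_harmonic_antidiff p n
    = real (2 * Q choose Q) * real (Q choose Suc n) / real (2 * Suc n choose Suc n)
        * (2 * real n + 1) / (2 * (real p + 1)) * (odd_harmonic Q - odd_harmonic n)"
proof -
  define A D F where "A = real (2 * Q choose Q)" and "D = real (Q choose Suc n)"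
    and "F = real (2 * Suc n choose Suc n)"
  define a b s where "a = real p + 1" and "b = 2 * real n + 1" and "s = real (Suc n)"
  have pos: "a > 0" "b > 0" "F > 0" "s > 0"
    unfolding a_def b_def F_def s_def by (simp_all del: binomial_Suc_Suc)
  have "Q - n = Suc p"
    unfolding Q_def by simp
  then have binom: "real (Q choose n) = s * D / a"
    using arg_cong[of _ _ real, OF diff_times_binomial_eq_Suc_times[of Q n]] pos
    unfolding a_def D_def s_def by (simp add: field_simps)
  have central: "real (2 * n choose n) = s * F / (2 * b)"
    using arg_cong[of _ _ real, OF Suc_times_central_binomial_Suc[of n]] pos
    unfolding b_def F_def s_def by (simp add: field_simps del: binomial_Suc_Suc)
  have "odd_harmonic_antidiff p n = A * (s * D / a) * (odd_harmonic Q - odd_harmonic n) / (4 * (s * F / (2 * b)))"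
    unfolding odd_harmonic_antidiff_def Q_def[symmetric] binom central A_def ..
  also have "\<dots> = A * D / F * b / (2 * a) * (odd_harmonic Q - odd_harmonic n)"
    using pos by (simp add: field_simps)
  finally show ?thesis
    unfolding A_def D_def F_def a_def b_def .
qed

lemma odd_harmonic_antidiff_Suc_eq:
  fixes n p :: nat
  defines "Q \<equiv> n + p + 1"
  shows "odd_harmonic_antidiff p (Suc n)
    = real (2 * Q choose Q) * real (Q choose Suc n) / real (2 * Suc n choose Suc n)
        * (2 * real Q + 1) / (2 * (real p + 1))
        * (odd_harmonic Q + 1 / (2 * real Q + 1) - (odd_harmonic n + 1 / (2 * real n + 1)))"
proof -
  define A D F where "A = real (2 * Q choose Q)" and "D = real (Q choose Suc n)"
    and "F = real (2 * Suc n choose Suc n)"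
  define a c t where "a = real p + 1" and "c = 2 * real Q + 1" and "t = real (Suc Q)"
  have pos: "a > 0" "F > 0" "t > 0"
    unfolding a_def F_def t_def by (simp_all del: binomial_Suc_Suc)
  have rescale: "2 * c * A / t * (t * D / a) * w / (4 * F) = A * D / F * c / (2 * a) * w" for w
    using pos by (simp add: field_simps)
  have "Suc Q - Suc n = Suc p"
    unfolding Q_def by simp
  then have binom: "real (Suc Q choose Suc n) = t * D / a"
    using arg_cong[of _ _ real, OF binomial_absorb_comp[of "Suc Q" "Suc n"]] pos
    unfolding a_def D_def t_def by (simp add: field_simps)
  have central: "real (2 * Suc Q choose Suc Q) = 2 * c * A / t"
    using arg_cong[of _ _ real, OF Suc_times_central_binomial_Suc[of Q]]
    unfolding c_def A_def t_def by (simp add: field_simps del: binomial_Suc_Suc)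
  have SucQ: "Suc n + p + 1 = Suc Q"
    unfolding Q_def by simp
  have "odd_harmonic_antidiff p (Suc n) = 2 * c * A / t * (t * D / a)
      * (odd_harmonic Q + 1 / c - (odd_harmonic n + 1 / (2 * real n + 1))) / (4 * F)"
    unfolding odd_harmonic_antidiff_def SucQ central binom odd_harmonic_Suc c_def F_def ..
  also have "\<dots> = A * D / F * c / (2 * a)
      * (odd_harmonic Q + 1 / c - (odd_harmonic n + 1 / (2 * real n + 1)))"
    by (rule rescale)
  finally show ?thesis
    unfolding A_def D_def F_def a_def c_def .
qed

lemma telescoping_step_identity:
  fixes a b c x y z :: real
  assumes "a > 0" "b > 0" "c = b + 2 * a"
  shows "z * c / (2 * a) * (x + 1 / c - (y + 1 / b)) - z * b / (2 * a) * (x - y) = z * (x - y - 1 / b)"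
proof -
  have "c * (x + 1 / c - (y + 1 / b)) - b * (x - y) = (b + 2 * a) * (x - y - 1 / b) + 1 - b * (x - y)"
    using assms by (simp add: algebra_simps)
  also have "\<dots> = 2 * a * (x - y - 1 / b)"
    using assms by (simp add: field_simps)
  finally have "c * (x + 1 / c - (y + 1 / b)) - b * (x - y) = 2 * a * (x - y - 1 / b)" .
  moreover have "z * c / (2 * a) * u - z * b / (2 * a) * v = z / (2 * a) * (c * u - b * v)" for u v
    by (simp add: algebra_simps diff_divide_distrib)
  ultimately show ?thesis
    using assms by simp
qed

lemma odd_harmonic_antidiff_Suc_diff:
  "odd_harmonic_antidiff p (Suc n) - odd_harmonic_antidiff p n
     = real (2 * (Suc n + p) choose (Suc n + p)) * real ((Suc n + p) choose Suc n)
         * (odd_harmonic (Suc n + p) - odd_harmonic (Suc n)) / real (2 * Suc n choose Suc n)"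
proof -
  define Q where "Q = n + p + 1"
  have Q: "Suc n + p = Q" "2 * real Q + 1 = 2 * real n + 1 + 2 * (real p + 1)"
    unfolding Q_def by simp_all
  have "odd_harmonic_antidiff p (Suc n) - odd_harmonic_antidiff p n
      = real (2 * Q choose Q) * real (Q choose Suc n) / real (2 * Suc n choose Suc n)
        * (odd_harmonic Q - odd_harmonic n - 1 / (2 * real n + 1))"
    unfolding odd_harmonic_antidiff_Suc_eq[of p n] odd_harmonic_antidiff_eq[of p n] Q_def[symmetric]
    by (rule telescoping_step_identity) (simp_all add: Q(2))
  then show ?thesis
    unfolding Q(1) odd_harmonic_Suc by (simp add: algebra_simps)
qed

theorem theorem16:
  fixes n p :: nat
  shows "(\<Sum>k=1..n. real ((2*(k+p)) choose (k+p)) * real ((k+p) choose k)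
            * (odd_harmonic (k+p) - odd_harmonic k) / real ((2*k) choose k))
       = 1/4 * real ((2*(n+p+1)) choose (n+p+1)) * real ((n+p+1) choose n)
            * (odd_harmonic (n+p+1) - odd_harmonic n) / real ((2*n) choose n)
         - 1/4 * real ((2*(p+1)) choose (p+1)) * odd_harmonic (p+1)"
proof -
  have "(\<Sum>k=1..n. real ((2*(k+p)) choose (k+p)) * real ((k+p) choose k)
            * (odd_harmonic (k+p) - odd_harmonic k) / real ((2*k) choose k))
      = odd_harmonic_antidiff p n - odd_harmonic_antidiff p 0"
  proof (induction n)
    case (Suc n)
    then show ?case
      using odd_harmonic_antidiff_Suc_diff[of p n] by simp
  qed simp
  moreover have "odd_harmonic_antidiff p 0 = 1/4 * real ((2*(p+1)) choose (p+1)) * odd_harmonic (p+1)"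
    unfolding odd_harmonic_antidiff_def by (simp add: odd_harmonic_def)
  ultimately show ?thesis
    unfolding odd_harmonic_antidiff_def by simp
qed

end
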